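(* Let $d\ge2$, let $\Omega=\{x\in\mathbb R^d:\ \ell_j(x)>b_j,\ j=1,\dots,m\}$ be a nonempty bounded open convex polytope, and suppose $\mathfrak E=\{e_1,\dots,e_p\}\subset\mathbb R^d$ is weakly incoming to $\Omega$. Let $x_0\in\overline\Omega$ and $k=\mathrm c(x_0)$. Then there exist $r>0$ and $I\subset\{1,\dots,m\}$ with $\#I=k$ such that $$\Omega\cap B(x_0,r)=B(x_0,r)\cap\Big(\bigcap_{i\in I}H_i^+\Big).$$ Further, there exist $\beta_1,\dots,\beta_k\in\{1,\dots,p\}$, $\theta_1,\dots,\theta_k\in\{\pm1\}$ and a bijection $\{1,\dots,k\}\ni n\mapsto i_n\in I$ such that for all $n\in\{1,\dots,k\}$: $\theta_ne_{\beta_n}$ is strictly incoming to $H_{i_n}$, and $\theta_ne_{\beta_n}$ is incoming to $H_{i_m}$ for all $m>n$.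
   Context: $\ell_j$ are linear forms on $\mathbb R^d$ and $b_j$ reals. $B(x_0,r)$ is the open ball. Define $\mathrm c:\mathbb R^d\to\mathbb N\cup\{+\infty\}$ by $\mathrm c(x)=0$ if $x\in\Omega$, $+\infty$ if $x\notin\overline\Omega$, $\#\{i:\ell_i(x)=b_i\}$ if $x\in\partial\Omega$. $\mathfrak E$ is weakly incoming to $\Omega$ if for every $x_0\in\partial\Omega$ there exist $\epsilon>0$, $\theta\in\{\pm1\}$, $e\in\mathfrak E$ with $\mathrm c(x_0+\theta te)<\mathrm c(x_0)$ for all $t\in]0,\epsilon]$. For each $k$, $H_k=\ker\ell_k$, $H_k^+=\{y:\ell_k(y)>b_k\}$, and $\nu_k$ is the unit vector orthogonal to $H_k$ with $\ell_k(\nu_k)>0$. A vector $u\ne0$ is incoming to $H_k$ if $\langle u,\nu_k\rangle\ge0$, and strictly incoming to $H_k$ if $\langle u,\nu_k\rangle>0$. *)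

theory Defs
  imports "HOL-Analysis.Analysis" "HOL-Library.Extended_Nat"
begin

definition polytope :: "(nat \<Rightarrow> 'a::euclidean_space \<Rightarrow> real) \<Rightarrow> (nat \<Rightarrow> real) \<Rightarrow> nat \<Rightarrow> 'a set" where
  "polytope l b m = {x. \<forall>j\<in>{1..m}. l j x > b j}"

definition cnt :: "(nat \<Rightarrow> 'a::euclidean_space \<Rightarrow> real) \<Rightarrow> (nat \<Rightarrow> real) \<Rightarrow> nat \<Rightarrow> 'a \<Rightarrow> enat" where
  "cnt l b m x =
     (if x \<in> polytope l b m then 0
      else if x \<notin> closure (polytope l b m) then \<infinity>
      else enat (card {i\<in>{1..m}. l i x = b i}))"

definition weakly_incoming :: "'a::euclidean_space set \<Rightarrow> (nat \<Rightarrow> 'a \<Rightarrow> real) \<Rightarrow> (nat \<Rightarrow> real) \<Rightarrow> nat \<Rightarrow> bool" where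
  "weakly_incoming E l b m \<longleftrightarrow>
     (\<forall>x0\<in>frontier (polytope l b m). \<exists>\<epsilon>>0. \<exists>\<theta>\<in>{-1, 1::real}. \<exists>e\<in>E.
        \<forall>t\<in>{0<..\<epsilon>}. cnt l b m (x0 + (\<theta> * t) *\<^sub>R e) < cnt l b m x0)"

definition Hplus :: "('a \<Rightarrow> real) \<Rightarrow> real \<Rightarrow> 'a set" where
  "Hplus l c = {y. l y > c}"

definition unit_normal :: "('a::euclidean_space \<Rightarrow> real) \<Rightarrow> 'a" where
  "unit_normal l = (SOME v. norm v = 1 \<and> (\<forall>y. l y = 0 \<longrightarrow> v \<bullet> y = 0) \<and> l v > 0)"

definition incoming :: "'a::euclidean_space \<Rightarrow> ('a \<Rightarrow> real) \<Rightarrow> bool" where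
  "incoming u l \<longleftrightarrow> u \<noteq> 0 \<and> u \<bullet> unit_normal l \<ge> 0"

definition strictly_incoming :: "'a::euclidean_space \<Rightarrow> ('a \<Rightarrow> real) \<Rightarrow> bool" where
  "strictly_incoming u l \<longleftrightarrow> u \<noteq> 0 \<and> u \<bullet> unit_normal l > 0"

end

theory Submission
  imports Defs
begin

text \<open>
  Near a point of the closure only the active constraints matter, which gives the local
  description of the polytope. For the directions, move from a boundary point along the
  signed vector supplied by weak incomingness: the count c drops, so the vector keeps every
  active constraint nonnegative and makes at least one of them positive, while for a short
  step the new active set is exactly the set of old active constraints the vector is tangent
  to. Iterating this descent peels the active constraints off in layers; enumerating them
  layer by layer gives the required ordering, since the vector of a layer is nonnegative on
  all later layers.
\<close>

definition active :: "(nat \<Rightarrow> 'a \<Rightarrow> real) \<Rightarrow> (nat \<Rightarrow> real) \<Rightarrow> nat \<Rightarrow> 'a \<Rightarrow> nat set" where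
  "active l b m x = {i\<in>{1..m}. l i x = b i}"

lemma linear_add_scaleR_eq:
  fixes f :: "'a::euclidean_space \<Rightarrow> real"
  shows "linear f \<Longrightarrow> f (x + t *\<^sub>R u) = f x + t * f u"
  by (simp add: linear_add linear_cmul)

lemma continuous_on_linear_functional:
  fixes f :: "'a::euclidean_space \<Rightarrow> real"
  shows "linear f \<Longrightarrow> continuous_on S f"
  by (simp add: linear_continuous_on linear_conv_bounded_linear)

lemma closure_polytope_ge:
  fixes l :: "nat \<Rightarrow> 'a::euclidean_space \<Rightarrow> real"
  assumes lin: "\<forall>j\<in>{1..m}. linear (l j)" and x: "x \<in> closure (polytope l b m)"
    and j: "j \<in> {1..m}"
  shows "l j x \<ge> b j"
proof -
  have "closed {y. b j \<le> l j y}"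
    using lin j by (intro closed_Collect_le continuous_on_const continuous_on_linear_functional) auto
  moreover have "polytope l b m \<subseteq> {y. b j \<le> l j y}"
    using j by (auto simp: polytope_def intro: less_imp_le)
  ultimately show ?thesis
    using x closure_minimal by blast
qed

lemma open_Inter_strict_halfspaces:
  fixes l :: "nat \<Rightarrow> 'a::euclidean_space \<Rightarrow> real"
  assumes "finite J" and "\<forall>j\<in>J. linear (l j)"
  shows "open (\<Inter>j\<in>J. {y. b j < l j y})"
  using assms
  by (intro open_INT ballI open_Collect_less continuous_on_const continuous_on_linear_functional) auto

lemma polytope_eq_Inter: "polytope l b m = (\<Inter>j\<in>{1..m}. {y. b j < l j y})"
  by (auto simp: polytope_def)

lemma closure_polytope_frontier:
  fixes l :: "nat \<Rightarrow> 'a::euclidean_space \<Rightarrow> real"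
  assumes "\<forall>j\<in>{1..m}. linear (l j)" and "x \<in> closure (polytope l b m)"
    and "active l b m x \<noteq> {}"
  shows "x \<in> frontier (polytope l b m)"
proof -
  have "x \<notin> polytope l b m"
    using assms(3) by (force simp: active_def polytope_def)
  moreover have "open (polytope l b m)"
    unfolding polytope_eq_Inter using assms(1) by (intro open_Inter_strict_halfspaces) auto
  ultimately show ?thesis
    using assms(2) by (simp add: frontier_def interior_open)
qed

lemma cnt_closure:
  fixes l :: "nat \<Rightarrow> 'a::euclidean_space \<Rightarrow> real"
  assumes "x \<in> closure (polytope l b m)"
  shows "cnt l b m x = enat (card (active l b m x))"
proof (cases "x \<in> polytope l b m")
  case True
  then have "active l b m x = {}"
    by (force simp: active_def polytope_def)
  with True show ?thesis
    by (simp add: cnt_def zero_enat_def)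
qed (use assms in \<open>simp add: cnt_def active_def\<close>)

lemma cnt_finite_imp_closure:
  "cnt l b m x < enat n \<Longrightarrow> x \<in> closure (polytope l b m)"
  using closure_subset by (auto simp: cnt_def split: if_splits)

lemma polytope_Int_ball_eq:
  fixes l :: "nat \<Rightarrow> 'a::euclidean_space \<Rightarrow> real"
  assumes lin: "\<forall>j\<in>{1..m}. linear (l j)" and x: "x \<in> closure (polytope l b m)"
  obtains r where "r > 0"
    "polytope l b m \<inter> ball x r = ball x r \<inter> (\<Inter>i\<in>active l b m x. Hplus (l i) (b i))"
proof -
  define U where "U = (\<Inter>j\<in>{1..m} - active l b m x. {y. b j < l j y})"
  have "open U"
    unfolding U_def using lin by (intro open_Inter_strict_halfspaces) auto
  moreover have "x \<in> U"
    using closure_polytope_ge[OF lin x] by (force simp: U_def active_def)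
  ultimately obtain r where r: "r > 0" "ball x r \<subseteq> U"
    using open_contains_ball by blast
  have "polytope l b m = U \<inter> (\<Inter>i\<in>active l b m x. Hplus (l i) (b i))"
    by (auto simp: polytope_def U_def Hplus_def active_def)
  with r show ?thesis
    by (intro that[of r]) auto
qed

lemma active_after_short_step:
  fixes l :: "nat \<Rightarrow> 'a::euclidean_space \<Rightarrow> real"
  assumes lin: "\<forall>j\<in>{1..m}. linear (l j)"
  obtains d where "d > 0"
    "\<And>t. 0 < t \<Longrightarrow> t < d \<Longrightarrow> active l b m (x + t *\<^sub>R u) = {i\<in>active l b m x. l i u = 0}"
proof -
  let ?J = "{1..m} - active l b m x"
  have "\<forall>\<^sub>F t in at_right 0. \<forall>j\<in>?J. l j x + t * l j u \<noteq> b j"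
  proof (rule eventually_ball_finite)
    show "\<forall>j\<in>?J. \<forall>\<^sub>F t in at_right 0. l j x + t * l j u \<noteq> b j"
    proof
      fix j assume "j \<in> ?J"
      then have "l j x + 0 * l j u \<noteq> b j"
        by (simp add: active_def)
      moreover have "((\<lambda>t. l j x + t * l j u) \<longlongrightarrow> l j x + 0 * l j u) (at_right 0)"
        by (intro tendsto_intros)
      ultimately show "\<forall>\<^sub>F t in at_right 0. l j x + t * l j u \<noteq> b j"
        using tendsto_imp_eventually_ne by blast
    qed
  qed simp
  then obtain d where d: "d > 0" "\<And>t. 0 < t \<Longrightarrow> t < d \<Longrightarrow> \<forall>j\<in>?J. l j x + t * l j u \<noteq> b j"
    by (auto simp: eventually_at_right_field)
  show ?thesis
  proof (rule that[OF d(1)])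
    fix t :: real assume "0 < t" "t < d"
    with d(2)[of t] show "active l b m (x + t *\<^sub>R u) = {i\<in>active l b m x. l i u = 0}"
      using lin by (auto simp: active_def linear_add_scaleR_eq)
  qed
qed

lemma weakly_incoming_descent:
  fixes l :: "nat \<Rightarrow> 'a::euclidean_space \<Rightarrow> real"
  assumes lin: "\<forall>j\<in>{1..m}. linear (l j)" and wi: "weakly_incoming E l b m"
    and x: "x \<in> closure (polytope l b m)" and A: "active l b m x \<noteq> {}"
  obtains \<theta> e y where "\<theta> \<in> {-1, 1}" "e \<in> E" "y \<in> closure (polytope l b m)"
    "\<forall>i\<in>active l b m x. l i (\<theta> *\<^sub>R e) \<ge> 0"
    "active l b m y = {i\<in>active l b m x. l i (\<theta> *\<^sub>R e) = 0}"
    "card (active l b m y) < card (active l b m x)"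
proof -
  obtain \<epsilon> \<theta> e where \<epsilon>: "\<epsilon> > 0" and \<theta>: "\<theta> \<in> {-1, 1}" and e: "e \<in> E"
    and dec: "\<And>t. t \<in> {0<..\<epsilon>} \<Longrightarrow> cnt l b m (x + (\<theta> * t) *\<^sub>R e) < cnt l b m x"
    using wi closure_polytope_frontier[OF lin x A] unfolding weakly_incoming_def by blast
  define u where "u = \<theta> *\<^sub>R e"
  have step: "x + t *\<^sub>R u \<in> closure (polytope l b m) \<and>
      card (active l b m (x + t *\<^sub>R u)) < card (active l b m x)" if "0 < t" "t \<le> \<epsilon>" for t
  proof -
    have "cnt l b m (x + t *\<^sub>R u) < enat (card (active l b m x))"
      using dec[of t] that cnt_closure[OF x] by (simp add: u_def mult.commute)
    then show ?thesis
      using cnt_finite_imp_closure cnt_closure by fastforce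
  qed
  have nonneg: "\<forall>i\<in>active l b m x. l i u \<ge> 0"
  proof
    fix i assume i: "i \<in> active l b m x"
    then have "l i (x + \<epsilon> *\<^sub>R u) \<ge> l i x"
      using closure_polytope_ge[OF lin conjunct1[OF step[OF \<epsilon> order.refl]]]
      by (auto simp: active_def)
    then show "l i u \<ge> 0"
      using i lin \<epsilon> by (auto simp: active_def linear_add_scaleR_eq zero_le_mult_iff)
  qed
  obtain d where d: "d > 0"
    "\<And>t. 0 < t \<Longrightarrow> t < d \<Longrightarrow> active l b m (x + t *\<^sub>R u) = {i\<in>active l b m x. l i u = 0}"
    using active_after_short_step[OF lin] by blast
  define t where "t = min (d / 2) \<epsilon>"
  have t: "0 < t" "t \<le> \<epsilon>" "t < d"
    using d(1) \<epsilon> by (auto simp: t_def)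
  show ?thesis
    using that[OF \<theta> e _ nonneg[unfolded u_def] d(2)[OF t(1,3), unfolded u_def]] step[OF t(1,2)]
    by (simp add: u_def)
qed

text \<open>
  The rank \<open>\<rho>\<close> records the layer in which a constraint is peeled off; \<open>u i\<close> is the signed
  vector of that layer.
\<close>

lemma weakly_incoming_layers:
  fixes l :: "nat \<Rightarrow> 'a::euclidean_space \<Rightarrow> real"
  assumes lin: "\<forall>j\<in>{1..m}. linear (l j)" and wi: "weakly_incoming E l b m"
    and "x \<in> closure (polytope l b m)"
  shows "\<exists>\<rho>::nat \<Rightarrow> nat. \<exists>u. \<forall>i\<in>active l b m x.
     (\<exists>\<theta>\<in>{-1, 1::real}. \<exists>e\<in>E. u i = \<theta> *\<^sub>R e) \<and> l i (u i) > 0 \<and>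
     (\<forall>j\<in>active l b m x. \<rho> i \<le> \<rho> j \<longrightarrow> l j (u i) \<ge> 0)"
  using assms(3)
proof (induction "card (active l b m x)" arbitrary: x rule: less_induct)
  case less
  show ?case
  proof (cases "active l b m x = {}")
    case False
    let ?A = "active l b m x"
    obtain \<theta> e y where \<theta>: "\<theta> \<in> {-1, 1}" and e: "e \<in> E"
      and y: "y \<in> closure (polytope l b m)" and nonneg: "\<forall>i\<in>?A. l i (\<theta> *\<^sub>R e) \<ge> 0"
      and Ay: "active l b m y = {i\<in>?A. l i (\<theta> *\<^sub>R e) = 0}"
      and card: "card (active l b m y) < card ?A"
      using weakly_incoming_descent[OF lin wi less.prems False] by blast
    obtain \<rho>' :: "nat \<Rightarrow> nat" and u' where IH: "\<forall>i\<in>active l b m y.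
        (\<exists>\<theta>\<in>{-1, 1::real}. \<exists>e\<in>E. u' i = \<theta> *\<^sub>R e) \<and> l i (u' i) > 0 \<and>
        (\<forall>j\<in>active l b m y. \<rho>' i \<le> \<rho>' j \<longrightarrow> l j (u' i) \<ge> 0)"
      using less.hyps[OF card y] by blast
    define \<rho> where "\<rho> i = (if i \<in> active l b m y then Suc (\<rho>' i) else 0)" for i
    define u where "u i = (if i \<in> active l b m y then u' i else \<theta> *\<^sub>R e)" for i
    have "\<forall>i\<in>?A. (\<exists>\<theta>\<in>{-1, 1::real}. \<exists>e\<in>E. u i = \<theta> *\<^sub>R e) \<and> l i (u i) > 0 \<and>
        (\<forall>j\<in>?A. \<rho> i \<le> \<rho> j \<longrightarrow> l j (u i) \<ge> 0)"
    proof
      fix i assume i: "i \<in> ?A"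
      show "(\<exists>\<theta>\<in>{-1, 1::real}. \<exists>e\<in>E. u i = \<theta> *\<^sub>R e) \<and> l i (u i) > 0 \<and>
          (\<forall>j\<in>?A. \<rho> i \<le> \<rho> j \<longrightarrow> l j (u i) \<ge> 0)"
      proof (cases "i \<in> active l b m y")
        case True
        then have later: "j \<in> active l b m y \<and> \<rho>' i \<le> \<rho>' j" if "j \<in> ?A" "\<rho> i \<le> \<rho> j" for j
          using that by (auto simp: \<rho>_def split: if_splits)
        from True IH have "(\<exists>\<theta>\<in>{-1, 1::real}. \<exists>e\<in>E. u' i = \<theta> *\<^sub>R e) \<and> l i (u' i) > 0 \<and>
            (\<forall>j\<in>active l b m y. \<rho>' i \<le> \<rho>' j \<longrightarrow> l j (u' i) \<ge> 0)"
          by blast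
        with True later show ?thesis
          unfolding u_def by (simp only: if_True) blast
      next
        case False
        with i Ay have "l i (\<theta> *\<^sub>R e) \<noteq> 0"
          by blast
        with i nonneg have "l i (\<theta> *\<^sub>R e) > 0"
          by force
        moreover have "u i = \<theta> *\<^sub>R e"
          using False by (simp add: u_def)
        ultimately show ?thesis
          using \<theta> e nonneg by auto
      qed
    qed
    then show ?thesis
      by blast
  qed simp
qed

lemma monotone_enumeration:
  fixes A :: "'a set" and \<rho> :: "'a \<Rightarrow> nat"
  assumes "finite A"
  obtains idx where "bij_betw idx {1..card A} A"
    "\<And>n q. n \<in> {1..card A} \<Longrightarrow> q \<in> {1..card A} \<Longrightarrow> n < q \<Longrightarrow> \<rho> (idx n) \<le> \<rho> (idx q)"
proof -
  obtain ys where ys: "distinct ys" "set ys = A"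
    using assms finite_distinct_list by blast
  define xs where "xs = sort_key \<rho> ys"
  have xs: "distinct xs" "set xs = A" "length xs = card A" "sorted (map \<rho> xs)"
    using ys distinct_card[of xs] by (simp_all add: xs_def)
  have "bij_betw (\<lambda>n. n - 1) {1..card A} {..<length xs}"
    unfolding xs(3) by (rule bij_betwI[where g = "\<lambda>n. n + 1"]) auto
  then have "bij_betw (\<lambda>n. xs ! (n - 1)) {1..card A} A"
    using bij_betw_trans[OF _ bij_betw_nth[OF xs(1) refl xs(2)[symmetric]]] by (simp add: comp_def)
  then show ?thesis
  proof (rule that)
    fix n q assume "n \<in> {1..card A}" "q \<in> {1..card A}" "n < q"
    then show "\<rho> (xs ! (n - 1)) \<le> \<rho> (xs ! (q - 1))"
      using sorted_nth_mono[OF xs(4), of "n - 1" "q - 1"] xs(3) by auto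
  qed
qed

text \<open>The \<open>SOME\<close> in \<open>unit_normal\<close> is determined: it is the normalised Riesz vector of \<open>f\<close>.\<close>

lemma inner_unit_normal:
  fixes f :: "'a::euclidean_space \<Rightarrow> real"
  assumes lf: "linear f" and nz: "f \<noteq> (\<lambda>x. 0)"
  obtains c where "c > 0" "\<And>u. u \<bullet> unit_normal f = c * f u"
proof -
  define w where "w = adjoint f 1"
  have fw: "f u = u \<bullet> w" for u
    using adjoint_works[OF lf, of u 1] by (simp add: w_def)
  have w: "w \<noteq> 0" "w \<bullet> w > 0"
    using nz fw by auto
  have "\<exists>v. norm v = 1 \<and> (\<forall>y. f y = 0 \<longrightarrow> v \<bullet> y = 0) \<and> f v > 0"
  proof (intro exI conjI allI impI)
    show "norm (w /\<^sub>R norm w) = 1" "f (w /\<^sub>R norm w) > 0"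
      using w fw by simp_all
    show "(w /\<^sub>R norm w) \<bullet> y = 0" if "f y = 0" for y
      using that fw[of y] by (simp add: inner_commute)
  qed
  then have "norm (unit_normal f) = 1 \<and> (\<forall>y. f y = 0 \<longrightarrow> unit_normal f \<bullet> y = 0) \<and> f (unit_normal f) > 0"
    unfolding unit_normal_def by (rule someI_ex)
  then have v: "f (unit_normal f) > 0" "\<forall>y. f y = 0 \<longrightarrow> unit_normal f \<bullet> y = 0"
    by blast+
  define a where "a = (unit_normal f \<bullet> w) / (w \<bullet> w)"
  define z where "z = unit_normal f - a *\<^sub>R w"
  have zw: "z \<bullet> w = 0"
    using w by (simp add: z_def a_def inner_diff_left)
  then have "unit_normal f \<bullet> z = 0"
    using v(2) fw by simp
  with zw have "z \<bullet> z = 0"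
    by (simp add: z_def inner_diff_left inner_commute)
  then have eq: "unit_normal f = a *\<^sub>R w"
    by (simp add: z_def)
  have "a > 0"
    using v(1) w unfolding fw eq by (simp add: zero_less_mult_iff)
  then show ?thesis
    by (rule that) (simp add: eq fw inner_commute)
qed

lemma strictly_incoming_iff:
  fixes f :: "'a::euclidean_space \<Rightarrow> real"
  assumes "linear f" and "f \<noteq> (\<lambda>x. 0)"
  shows "strictly_incoming u f \<longleftrightarrow> f u > 0"
proof -
  obtain c where "c > 0" "\<And>u. u \<bullet> unit_normal f = c * f u"
    using inner_unit_normal[OF assms] by blast
  moreover have "f u > 0 \<Longrightarrow> u \<noteq> 0"
    using linear_0[OF assms(1)] by auto
  ultimately show ?thesis
    by (auto simp: strictly_incoming_def zero_less_mult_iff)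
qed

lemma incoming_iff:
  fixes f :: "'a::euclidean_space \<Rightarrow> real"
  assumes "linear f" and "f \<noteq> (\<lambda>x. 0)"
  shows "incoming u f \<longleftrightarrow> u \<noteq> 0 \<and> f u \<ge> 0"
proof -
  obtain c where "c > 0" "\<And>u. u \<bullet> unit_normal f = c * f u"
    using inner_unit_normal[OF assms] by blast
  then show ?thesis
    by (auto simp: incoming_def zero_le_mult_iff)
qed

lemma layered_directions_enumeration:
  fixes l :: "nat \<Rightarrow> 'a::euclidean_space \<Rightarrow> real" and \<rho> :: "nat \<Rightarrow> nat"
  assumes "finite A" and lin: "\<forall>j\<in>A. linear (l j)" and nz: "\<forall>j\<in>A. l j \<noteq> (\<lambda>x. 0)"
    and u: "\<forall>i\<in>A. l i (u i) > 0 \<and> (\<forall>j\<in>A. \<rho> i \<le> \<rho> j \<longrightarrow> l j (u i) \<ge> 0)"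
  obtains idx where "bij_betw idx {1..card A} A"
    "\<And>n. n \<in> {1..card A} \<Longrightarrow> strictly_incoming (u (idx n)) (l (idx n))"
    "\<And>n q. n \<in> {1..card A} \<Longrightarrow> q \<in> {1..card A} \<Longrightarrow> n < q \<Longrightarrow> incoming (u (idx n)) (l (idx q))"
proof -
  obtain idx where idx: "bij_betw idx {1..card A} A"
    "\<And>n q. n \<in> {1..card A} \<Longrightarrow> q \<in> {1..card A} \<Longrightarrow> n < q \<Longrightarrow> \<rho> (idx n) \<le> \<rho> (idx q)"
    using monotone_enumeration[OF assms(1)] by blast
  note idx_in = bij_betw_apply[OF idx(1)]
  show ?thesis
  proof (rule that[OF idx(1)])
    fix n assume n: "n \<in> {1..card A}"
    have pos: "l (idx n) (u (idx n)) > 0"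
      using u idx_in[OF n] by blast
    then show "strictly_incoming (u (idx n)) (l (idx n))"
      using strictly_incoming_iff lin nz idx_in[OF n] by blast
    fix q assume q: "q \<in> {1..card A}" "n < q"
    have "u (idx n) \<noteq> 0"
      using pos lin linear_0 idx_in[OF n] by fastforce
    moreover have "l (idx q) (u (idx n)) \<ge> 0"
      using u idx_in[OF n] idx_in[OF q(1)] idx(2)[OF n q] by blast
    ultimately show "incoming (u (idx n)) (l (idx q))"
      using incoming_iff lin nz idx_in[OF q(1)] by blast
  qed
qed

theorem lemma1p3:
  fixes l :: "nat \<Rightarrow> 'a::euclidean_space \<Rightarrow> real" and b :: "nat \<Rightarrow> real" and m p :: nat
    and e :: "nat \<Rightarrow> 'a" and x0 :: 'a
  assumes "DIM('a) \<ge> 2"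
    and "\<forall>j\<in>{1..m}. linear (l j)"
    and "\<forall>j\<in>{1..m}. l j \<noteq> (\<lambda>x. 0)"
    and "polytope l b m \<noteq> {}"
    and "bounded (polytope l b m)"
    and "weakly_incoming (e ` {1..p}) l b m"
    and "x0 \<in> closure (polytope l b m)"
  shows "\<exists>r>0. \<exists>I \<subseteq> {1..m}. enat (card I) = cnt l b m x0 \<and>
           polytope l b m \<inter> ball x0 r = ball x0 r \<inter> (\<Inter>i\<in>I. Hplus (l i) (b i)) \<and>
           (\<exists>\<beta> \<theta> idx. (\<forall>n\<in>{1..card I}. \<beta> n \<in> {1..p} \<and> \<theta> n \<in> {-1, 1::real}) \<and>
              bij_betw idx {1..card I} I \<and>
              (\<forall>n\<in>{1..card I}. strictly_incoming (\<theta> n *\<^sub>R e (\<beta> n)) (l (idx n)) \<and>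
                 (\<forall>q\<in>{1..card I}. q > n \<longrightarrow> incoming (\<theta> n *\<^sub>R e (\<beta> n)) (l (idx q)))))"
proof -
  note lin = assms(2) and x0 = assms(7)
  define A where "A = active l b m x0"
  have A: "A \<subseteq> {1..m}" "finite A"
    by (auto simp: A_def active_def)
  obtain r where r: "r > 0" "polytope l b m \<inter> ball x0 r = ball x0 r \<inter> (\<Inter>i\<in>A. Hplus (l i) (b i))"
    using polytope_Int_ball_eq[OF lin x0] unfolding A_def by blast
  obtain \<rho> :: "nat \<Rightarrow> nat" and u where u: "\<forall>i\<in>A.
      (\<exists>\<theta>\<in>{-1, 1::real}. \<exists>e'\<in>e ` {1..p}. u i = \<theta> *\<^sub>R e') \<and> l i (u i) > 0 \<and>
      (\<forall>j\<in>A. \<rho> i \<le> \<rho> j \<longrightarrow> l j (u i) \<ge> 0)"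
    using weakly_incoming_layers[OF lin assms(6) x0] unfolding A_def by blast
  have "\<forall>i\<in>A. \<exists>\<theta> \<beta>. \<theta> \<in> {-1, 1::real} \<and> \<beta> \<in> {1..p} \<and> u i = \<theta> *\<^sub>R e \<beta>"
    using u by blast
  then obtain \<theta> \<beta> where \<theta>\<beta>: "\<And>i. i \<in> A \<Longrightarrow> \<theta> i \<in> {-1, 1::real} \<and> \<beta> i \<in> {1..p} \<and> u i = \<theta> i *\<^sub>R e (\<beta> i)"
    by metis
  have "\<forall>j\<in>A. linear (l j)" "\<forall>j\<in>A. l j \<noteq> (\<lambda>x. 0)"
    using A(1) lin assms(3) by blast+
  moreover have "\<forall>i\<in>A. l i (u i) > 0 \<and> (\<forall>j\<in>A. \<rho> i \<le> \<rho> j \<longrightarrow> l j (u i) \<ge> 0)"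
    using u by blast
  ultimately obtain idx where idx: "bij_betw idx {1..card A} A"
    "\<And>n. n \<in> {1..card A} \<Longrightarrow> strictly_incoming (u (idx n)) (l (idx n))"
    "\<And>n q. n \<in> {1..card A} \<Longrightarrow> q \<in> {1..card A} \<Longrightarrow> n < q \<Longrightarrow> incoming (u (idx n)) (l (idx q))"
    using layered_directions_enumeration[OF A(2)] by blast
  have "enat (card A) = cnt l b m x0"
    using cnt_closure[OF x0] by (simp add: A_def)
  moreover have "u (idx n) = \<theta> (idx n) *\<^sub>R e (\<beta> (idx n))" "\<beta> (idx n) \<in> {1..p}" "\<theta> (idx n) \<in> {-1, 1}"
    if "n \<in> {1..card A}" for n
    using \<theta>\<beta>[OF bij_betw_apply[OF idx(1) that]] by simp_all
  ultimately show ?thesis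
    using r A(1) idx
    by (intro exI[of _ r] exI[of _ A] exI[of _ "\<lambda>n. \<beta> (idx n)"] exI[of _ "\<lambda>n. \<theta> (idx n)"]
        exI[of _ idx] conjI) (simp_all add: Ball_def)
qed

end
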